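(* Fix $n\in\mathbb{N}$. Consider a random problem instance, i.e. a random variable whose value determines a target set $T\subseteq\mathbb{F}_2^n$ (with $\mathbb{F}_2=\{0,1\}$), assumed nonempty. For each instance let $C=\sum_{z\in T}|z\rangle\langle z|$, $X=\sum_{j=1}^n\sigma^x_j$, $|\beta,\gamma\rangle_1=e^{-i\beta X}e^{-i\gamma C}|+\rangle^{\otimes n}$ and $F_1(\beta,\gamma)=\langle\beta,\gamma|_1C|\beta,\gamma\rangle_1$. For $k\in T$ and $0\le d\le n$ let $\#_d(k)=|\{z\in T:d_H(z,k)=d\}|$ ($d_H$ the Hamming distance), $f_n(\beta,d)=(\cos\beta)^{n-d}(-i\sin\beta)^d$, and $$c_k(\beta,\gamma)=\sum_{d=0}^n\left(\#_d(k)(e^{-i\gamma}-1)+\binom{n}{d}\right)f_n(\beta,d).$$ For a function $g$ of $k$, write $\overline{g(k)}=\frac{1}{|T|}\sum_{k\in T}g(k)$ (an instance-dependent random variable). Define $$\tilde E(F_1(\beta,\gamma))=\frac{E(|T|)}{2^n}\,E\!\left(\overline{|c_k(\beta,\gamma)|^2}\right).$$ Then $$E\!\left(\overline{|c_k(\beta,\gamma)|^2}\right)=\sum_{d_1,d_2=0}^n w_{d_1,d_2}(\gamma)\,f_n(\beta,d_1)\,f_n(\beta,d_2)^*,$$ where $$\begin{aligned}w_{d_1,d_2}(\gamma)=\;&E\!\left(\overline{\#_{d_1}(k)\#_{d_2}(k)}\right)(e^{-i\gamma}-1)(e^{i\gamma}-1)+E\!\left(\overline{\#_{d_1}(k)}\right)(e^{-i\gamma}-1)\binom{n}{d_2}\\&+E\!\left(\overline{\#_{d_2}(k)}\right)(e^{i\gamma}-1)\binom{n}{d_1}+\binom{n}{d_1}\binom{n}{d_2},\end{aligned}$$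 and the approximation error satisfies $$\left|E(F_1(\beta,\gamma))-\tilde E(F_1(\beta,\gamma))\right|\le\sqrt{\operatorname{Var}(|T|)\,\operatorname{Var}\!\left(\overline{|c_k(\beta,\gamma)|^2}\right)}.$$
   Context: Expectations $E$, variances $\operatorname{Var}$ are taken over the random instance (hence over the random target set $T$). $|z\rangle$ denotes the computational basis state of $z\in\mathbb{F}_2^n$, $|+\rangle=(|0\rangle+|1\rangle)/\sqrt2$, $\sigma^x_j$ is Pauli-$X$ on qubit $j$, and ${}^*$ denotes complex conjugation. *)

theory Defs
  imports "HOL-Probability.Probability"
begin

text \<open>Computational basis of n qubits: bit strings of length n (elements of F_2^n).
Operators are matrices indexed by bit strings, vectors are functions on bit strings.\<close>

definition bits :: "nat \<Rightarrow> bool list set" where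
  "bits n = {z. length z = n}"

definition hamming :: "bool list \<Rightarrow> bool list \<Rightarrow> nat" where
  "hamming z k = card {j. j < length z \<and> z ! j \<noteq> k ! j}"

type_synonym qop = "bool list \<Rightarrow> bool list \<Rightarrow> complex"
type_synonym qvec = "bool list \<Rightarrow> complex"

definition mat_mult :: "nat \<Rightarrow> qop \<Rightarrow> qop \<Rightarrow> qop" where
  "mat_mult n A B = (\<lambda>z w. \<Sum>y\<in>bits n. A z y * B y w)"

definition id_op :: qop where
  "id_op = (\<lambda>z w. if z = w then 1 else 0)"

definition mat_pow :: "nat \<Rightarrow> qop \<Rightarrow> nat \<Rightarrow> qop" where
  "mat_pow n A m = (mat_mult n A ^^ m) id_op"

definition mexp :: "nat \<Rightarrow> qop \<Rightarrow> qop" where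
  "mexp n A = (\<lambda>z w. \<Sum>m. mat_pow n A m z w / of_nat (fact m))"

definition op_scale :: "complex \<Rightarrow> qop \<Rightarrow> qop" where
  "op_scale c A = (\<lambda>z w. c * A z w)"

definition apply_op :: "nat \<Rightarrow> qop \<Rightarrow> qvec \<Rightarrow> qvec" where
  "apply_op n A v = (\<lambda>z. \<Sum>w\<in>bits n. A z w * v w)"

text \<open>Pauli X on qubit j (0-based): flips bit j.\<close>
definition sigma_x :: "nat \<Rightarrow> qop" where
  "sigma_x j = (\<lambda>z w. if z = w[j := \<not> w ! j] then 1 else 0)"

definition Xop :: "nat \<Rightarrow> qop" where
  "Xop n = (\<lambda>z w. \<Sum>j<n. sigma_x j z w)"

definition Cop :: "bool list set \<Rightarrow> qop" where
  "Cop T = (\<lambda>z w. if z = w \<and> z \<in> T then 1 else 0)"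

definition plus_state :: "nat \<Rightarrow> qvec" where
  "plus_state n = (\<lambda>z. complex_of_real (1 / sqrt (2 ^ n)))"

definition qaoa_state :: "nat \<Rightarrow> bool list set \<Rightarrow> real \<Rightarrow> real \<Rightarrow> qvec" where
  "qaoa_state n T \<beta> \<gamma> =
     apply_op n (mexp n (op_scale (- \<i> * of_real \<beta>) (Xop n)))
       (apply_op n (mexp n (op_scale (- \<i> * of_real \<gamma>) (Cop T))) (plus_state n))"

text \<open>F_1 = <beta,gamma| C |beta,gamma> (a real number since C is Hermitian; we take Re).\<close>
definition F1 :: "nat \<Rightarrow> bool list set \<Rightarrow> real \<Rightarrow> real \<Rightarrow> real" where
  "F1 n T \<beta> \<gamma> = Re (\<Sum>z\<in>bits n. cnj (qaoa_state n T \<beta> \<gamma> z) *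
                       apply_op n (Cop T) (qaoa_state n T \<beta> \<gamma>) z)"

definition num_d :: "bool list set \<Rightarrow> nat \<Rightarrow> bool list \<Rightarrow> nat" where
  "num_d T d k = card {z\<in>T. hamming z k = d}"

definition fn :: "nat \<Rightarrow> real \<Rightarrow> nat \<Rightarrow> complex" where
  "fn n \<beta> d = (of_real (cos \<beta>)) ^ (n - d) * (- \<i> * of_real (sin \<beta>)) ^ d"

definition ck :: "nat \<Rightarrow> bool list set \<Rightarrow> real \<Rightarrow> real \<Rightarrow> bool list \<Rightarrow> complex" where
  "ck n T \<beta> \<gamma> k = (\<Sum>d\<le>n. (of_nat (num_d T d k) * (exp (- \<i> * of_real \<gamma>) - 1)
                              + of_nat (n choose d)) * fn n \<beta> d)"

definition avg :: "bool list set \<Rightarrow> (bool list \<Rightarrow> real) \<Rightarrow> real" where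
  "avg T g = (\<Sum>k\<in>T. g k) / real (card T)"

definition Ex :: "'i measure \<Rightarrow> ('i \<Rightarrow> real) \<Rightarrow> real" where
  "Ex M X = integral\<^sup>L M X"

definition Var :: "'i measure \<Rightarrow> ('i \<Rightarrow> real) \<Rightarrow> real" where
  "Var M X = Ex M (\<lambda>\<omega>. (X \<omega> - Ex M X)\<^sup>2)"

definition wgt :: "'i measure \<Rightarrow> ('i \<Rightarrow> bool list set) \<Rightarrow> nat \<Rightarrow> real \<Rightarrow> nat \<Rightarrow> nat \<Rightarrow> complex" where
  "wgt M T n \<gamma> d1 d2 =
     of_real (Ex M (\<lambda>\<omega>. avg (T \<omega>) (\<lambda>k. real (num_d (T \<omega>) d1 k * num_d (T \<omega>) d2 k))))
       * (exp (- \<i> * of_real \<gamma>) - 1) * (exp (\<i> * of_real \<gamma>) - 1)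
   + of_real (Ex M (\<lambda>\<omega>. avg (T \<omega>) (\<lambda>k. real (num_d (T \<omega>) d1 k))))
       * (exp (- \<i> * of_real \<gamma>) - 1) * of_nat (n choose d2)
   + of_real (Ex M (\<lambda>\<omega>. avg (T \<omega>) (\<lambda>k. real (num_d (T \<omega>) d2 k))))
       * (exp (\<i> * of_real \<gamma>) - 1) * of_nat (n choose d1)
   + of_nat (n choose d1) * of_nat (n choose d2)"

end

theory Submission
  imports Defs
begin

text \<open>The Walsh characters diagonalise every Pauli X, so the matrix entries of the mixer
exp(-i \<beta> X) factor over the qubits and equal f_n(\<beta>, d_H(z, w)); as exp(-i \<gamma> C) is diagonal,
the amplitude of the basis state k in the QAOA state is c_k / sqrt(2^n). Hence, instance by instance,
F_1 = |T| / 2^n * avg |c_k|^2. Expanding |c_k|^2 as a double sum over Hamming distances and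
integrating gives the formula for its expectation; the approximation error is the covariance of |T|
and avg |c_k|^2 divided by 2^n, which the Cauchy-Schwarz inequality bounds.\<close>

lemma bits_Suc: "bits (Suc n) = (\<lambda>(s, b). s @ [b]) ` (bits n \<times> UNIV)"
proof (rule set_eqI, rule iffI)
  fix x assume "x \<in> bits (Suc n)"
  then have L: "length x = Suc n" by (simp add: bits_def)
  then obtain ys y where xy: "x = ys @ [y]" by (metis length_Suc_conv_rev)
  with L have "(ys, y) \<in> bits n \<times> UNIV" by (simp add: bits_def)
  then show "x \<in> (\<lambda>(s, b). s @ [b]) ` (bits n \<times> UNIV)" unfolding xy by (rule rev_image_eqI) simp
qed (force simp: bits_def)

lemma finite_bits [simp]: "finite (bits n)"
proof -
  have "bits n = {xs. set xs \<subseteq> (UNIV :: bool set) \<and> length xs = n}" by (auto simp: bits_def)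
  then show ?thesis using finite_lists_length_eq[of "UNIV :: bool set" n] by simp
qed

lemma sum_bits_prod:
  fixes f :: "nat \<Rightarrow> bool \<Rightarrow> 'a::comm_semiring_1"
  shows "(\<Sum>s\<in>bits n. \<Prod>j<n. f j (s ! j)) = (\<Prod>j<n. f j False + f j True)"
proof (induction n)
  case 0
  then show ?case by (simp add: bits_def)
next
  case (Suc n)
  have inj: "inj_on (\<lambda>(s, b). s @ [b]) (bits n \<times> UNIV)"
    by (auto simp: inj_on_def)
  have snoc: "(\<Prod>j<Suc n. f j ((s @ [b]) ! j)) = (\<Prod>j<n. f j (s ! j)) * f n b"
    if "s \<in> bits n" for s b
  proof -
    have l: "length s = n" using that by (simp add: bits_def)
    have "(\<Prod>j<n. f j ((s @ [b]) ! j)) = (\<Prod>j<n. f j (s ! j))"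
      by (rule prod.cong) (auto simp: l nth_append)
    then show ?thesis by (simp add: l[symmetric])
  qed
  have "(\<Sum>s\<in>bits (Suc n). \<Prod>j<Suc n. f j (s ! j))
      = (\<Sum>(s, b)\<in>bits n \<times> UNIV. \<Prod>j<Suc n. f j ((s @ [b]) ! j))"
    unfolding bits_Suc by (subst sum.reindex[OF inj]) (simp add: case_prod_unfold)
  also have "\<dots> = (\<Sum>(s, b)\<in>bits n \<times> UNIV. (\<Prod>j<n. f j (s ! j)) * f n b)"
    by (intro sum.cong refl) (clarify, rule snoc)
  also have "\<dots> = (\<Sum>s\<in>bits n. \<Prod>j<n. f j (s ! j)) * (\<Sum>b\<in>UNIV. f n b)"
    by (simp add: sum_product sum.cartesian_product)
  also have "\<dots> = (\<Prod>j<Suc n. f j False + f j True)"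
    using Suc by (simp add: UNIV_bool add.commute)
  finally show ?case .
qed

lemma hamming_commute: "length z = length k \<Longrightarrow> hamming z k = hamming k z"
  unfolding hamming_def by (simp add: eq_commute)

lemma hamming_le_length: "hamming z k \<le> length z"
  unfolding hamming_def by (rule card_mono[of "{..<length z}", simplified]) auto

lemma hamming_eq_0_iff: "length z = length w \<Longrightarrow> hamming z w = 0 \<longleftrightarrow> z = w"
  unfolding hamming_def by (auto simp: list_eq_iff_nth_eq)

lemma prod_hamming_pow:
  fixes a b :: "'a::comm_monoid_mult"
  assumes "length z = n"
  shows "(\<Prod>j<n. if z ! j \<noteq> k ! j then b else a) = a ^ (n - hamming z k) * b ^ hamming z k"
proof -
  let ?D = "{..<n} \<inter> {j. z ! j \<noteq> k ! j}"
  have H: "hamming z k = card ?D"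
    unfolding hamming_def using assms by (intro arg_cong[where f = card]) auto
  have "{..<n} \<inter> - {j. z ! j \<noteq> k ! j} = {..<n} - ?D" by auto
  then have "card ({..<n} \<inter> - {j. z ! j \<noteq> k ! j}) = n - card ?D"
    by (simp add: card_Diff_subset)
  then show ?thesis by (simp add: prod.If_cases H mult.commute)
qed

definition walsh :: "nat \<Rightarrow> bool list \<Rightarrow> bool list \<Rightarrow> complex" where
  "walsh n s z = (\<Prod>j<n. if s ! j \<and> z ! j then -1 else 1)"

definition Xop_eigenvalue :: "nat \<Rightarrow> bool list \<Rightarrow> complex" where
  "Xop_eigenvalue n s = (\<Sum>j<n. if s ! j then -1 else 1)"

lemma walsh_flip:
  assumes "j < n" "length z = n"
  shows "walsh n s (z[j := \<not> z ! j]) = (if s ! j then -1 else 1) * walsh n s z"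
proof -
  let ?rest = "\<Prod>i\<in>{..<n} - {j}. if s ! i \<and> z ! i then -1 else 1"
  have "walsh n s (z[j := \<not> z ! j]) = (if s ! j \<and> \<not> z ! j then -1 else 1) * ?rest"
    unfolding walsh_def using assms
    by (subst prod.remove[of _ j]) (auto intro!: prod.cong simp: nth_list_update)
  also have "\<dots> = (if s ! j then -1 else 1) * ((if s ! j \<and> z ! j then -1 else 1) * ?rest)"
    by auto
  also have "\<dots> = (if s ! j then -1 else 1) * walsh n s z"
    unfolding walsh_def using assms by (subst (2) prod.remove[of _ j]) auto
  finally show ?thesis .
qed

lemma Xop_walsh:
  assumes z: "z \<in> bits n"
  shows "(\<Sum>y\<in>bits n. Xop n z y * walsh n s y) = Xop_eigenvalue n s * walsh n s z"
proof -
  have L: "length z = n" using z by (simp add: bits_def)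
  have flip: "(\<Sum>y\<in>bits n. sigma_x j z y * walsh n s y) = walsh n s (z[j := \<not> z ! j])"
    if j: "j < n" for j
  proof -
    have "sigma_x j z y = (if y = z[j := \<not> z ! j] then 1 else 0)" if "y \<in> bits n" for y
      using that L j by (auto simp: sigma_x_def bits_def)
    then have "(\<Sum>y\<in>bits n. sigma_x j z y * walsh n s y)
        = (\<Sum>y\<in>bits n. if y = z[j := \<not> z ! j] then walsh n s y else 0)"
      by (intro sum.cong refl) simp
    also have "\<dots> = walsh n s (z[j := \<not> z ! j])"
      using L by (subst sum.delta[OF finite_bits]) (simp add: bits_def)
    finally show ?thesis .
  qed
  have "(\<Sum>y\<in>bits n. Xop n z y * walsh n s y) = (\<Sum>j<n. \<Sum>y\<in>bits n. sigma_x j z y * walsh n s y)"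
    unfolding Xop_def by (simp add: sum_distrib_right sum.swap[of _ "bits n"])
  also have "\<dots> = (\<Sum>j<n. (if s ! j then -1 else 1) * walsh n s z)"
    using L by (intro sum.cong refl) (simp add: flip walsh_flip)
  also have "\<dots> = Xop_eigenvalue n s * walsh n s z"
    unfolding Xop_eigenvalue_def by (simp add: sum_distrib_right)
  finally show ?thesis .
qed

lemma sum_walsh_exp:
  fixes c :: complex
  assumes z: "z \<in> bits n"
  shows "(\<Sum>s\<in>bits n. walsh n s z * walsh n s w * exp (c * Xop_eigenvalue n s))
     = 2 ^ n * ((exp c + exp (- c)) / 2) ^ (n - hamming z w) * ((exp c - exp (- c)) / 2) ^ hamming z w"
proof -
  define f where "f j b = (if b \<and> z ! j then -1 else 1) * (if b \<and> w ! j then -1 else 1)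
      * exp (c * (if b then -1 else 1))" for j b
  have "walsh n s z * walsh n s w * exp (c * Xop_eigenvalue n s) = (\<Prod>j<n. f j (s ! j))" for s
    unfolding walsh_def Xop_eigenvalue_def f_def by (simp add: sum_distrib_left exp_sum prod.distrib)
  then have "(\<Sum>s\<in>bits n. walsh n s z * walsh n s w * exp (c * Xop_eigenvalue n s))
      = (\<Prod>j<n. f j False + f j True)"
    by (simp add: sum_bits_prod)
  also have "f j False + f j True
      = 2 * (if z ! j \<noteq> w ! j then (exp c - exp (- c)) / 2 else (exp c + exp (- c)) / 2)" for j
    unfolding f_def by auto
  then have "(\<Prod>j<n. f j False + f j True)
      = 2 ^ n * (\<Prod>j<n. if z ! j \<noteq> w ! j then (exp c - exp (- c)) / 2 else (exp c + exp (- c)) / 2)"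
    by (simp add: prod.distrib)
  also have "\<dots> = 2 ^ n * ((exp c + exp (- c)) / 2) ^ (n - hamming z w) * ((exp c - exp (- c)) / 2) ^ hamming z w"
    using z by (subst prod_hamming_pow) (auto simp: bits_def)
  finally show ?thesis .
qed

lemma walsh_orthogonal:
  assumes z: "z \<in> bits n" and w: "w \<in> bits n"
  shows "(\<Sum>s\<in>bits n. walsh n s z * walsh n s w) / 2 ^ n = id_op z w"
  using sum_walsh_exp[OF z, of w 0] hamming_eq_0_iff[of z w] z w
  by (auto simp: id_op_def bits_def)

lemma exp_sums: "(\<lambda>m. x ^ m / fact m) sums exp (x :: 'a::{real_normed_field, banach})"
  using exp_converges[of x] by (simp add: scaleR_conv_of_real divide_inverse mult.commute)

lemma mat_pow_Suc_apply:
  "mat_pow n A (Suc m) z w = (\<Sum>y\<in>bits n. A z y * mat_pow n A m y w)"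
  by (simp add: mat_pow_def mat_mult_def)

lemma mat_pow_scale_Xop:
  assumes z: "z \<in> bits n" and w: "w \<in> bits n"
  shows "mat_pow n (op_scale c (Xop n)) m z w
    = (\<Sum>s\<in>bits n. walsh n s z * walsh n s w * (c * Xop_eigenvalue n s) ^ m) / 2 ^ n"
  using z
proof (induction m arbitrary: z)
  case 0
  then show ?case using walsh_orthogonal[OF 0 w] by (simp add: mat_pow_def)
next
  case (Suc m)
  let ?e = "\<lambda>s. walsh n s w * (c * Xop_eigenvalue n s) ^ m"
  have "mat_pow n (op_scale c (Xop n)) (Suc m) z w
      = (\<Sum>y\<in>bits n. c * Xop n z y
           * ((\<Sum>s\<in>bits n. walsh n s y * walsh n s w * (c * Xop_eigenvalue n s) ^ m) / 2 ^ n))"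
    unfolding mat_pow_Suc_apply
    by (intro sum.cong refl) (subst Suc.IH, assumption, simp add: op_scale_def)
  also have "\<dots> = (\<Sum>y\<in>bits n. \<Sum>s\<in>bits n. c * ?e s * (Xop n z y * walsh n s y)) / 2 ^ n"
    by (simp add: sum_distrib_left sum_divide_distrib mult_ac)
  also have "\<dots> = (\<Sum>s\<in>bits n. c * ?e s * (\<Sum>y\<in>bits n. Xop n z y * walsh n s y)) / 2 ^ n"
    by (subst sum.swap) (simp add: sum_distrib_left)
  also have "\<dots> = (\<Sum>s\<in>bits n. walsh n s z * walsh n s w * (c * Xop_eigenvalue n s) ^ Suc m) / 2 ^ n"
    by (simp add: Xop_walsh[OF Suc.prems] mult_ac)
  finally show ?case .
qed

lemma mexp_scale_Xop:
  assumes z: "z \<in> bits n" and w: "w \<in> bits n"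
  shows "mexp n (op_scale c (Xop n)) z w
    = (\<Sum>s\<in>bits n. walsh n s z * walsh n s w * exp (c * Xop_eigenvalue n s)) / 2 ^ n"
proof -
  have "(\<lambda>m. (\<Sum>s\<in>bits n. walsh n s z * walsh n s w * ((c * Xop_eigenvalue n s) ^ m / fact m)) / 2 ^ n)
      sums ((\<Sum>s\<in>bits n. walsh n s z * walsh n s w * exp (c * Xop_eigenvalue n s)) / 2 ^ n)"
    by (intro sums_divide sums_sum sums_mult exp_sums)
  then show ?thesis
    unfolding mexp_def by (simp add: sums_iff mat_pow_scale_Xop[OF z w] sum_divide_distrib mult_ac)
qed

lemma mexp_mixer:
  assumes z: "z \<in> bits n" and w: "w \<in> bits n"
  shows "mexp n (op_scale (- \<i> * of_real \<beta>) (Xop n)) z w = fn n \<beta> (hamming z w)"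
proof -
  have "(exp (- \<i> * of_real \<beta>) + exp (- (- \<i> * of_real \<beta>))) / 2 = of_real (cos \<beta>)"
    by (simp add: cos_of_real[symmetric] cos_exp_eq add.commute)
  moreover have "(exp (- \<i> * of_real \<beta>) - exp (- (- \<i> * of_real \<beta>))) / 2 = - \<i> * of_real (sin \<beta>)"
    by (simp add: sin_of_real[symmetric] sin_exp_eq')
  ultimately show ?thesis
    unfolding mexp_scale_Xop[OF z w] sum_walsh_exp[OF z] fn_def by simp
qed

lemma mat_pow_diagonal:
  assumes diag: "\<And>z w. z \<noteq> w \<Longrightarrow> D z w = 0" and z: "z \<in> bits n"
  shows "mat_pow n D m z w = (if z = w then D z z ^ m else 0)"
  using z
proof (induction m arbitrary: z)
  case 0
  then show ?case by (simp add: mat_pow_def id_op_def)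
next
  case (Suc m)
  have "mat_pow n D (Suc m) z w = (\<Sum>y\<in>bits n. if y = z then D z z * mat_pow n D m z w else 0)"
    unfolding mat_pow_Suc_apply by (intro sum.cong refl) (auto simp: diag)
  also have "\<dots> = D z z * mat_pow n D m z w"
    using Suc.prems by (subst sum.delta[OF finite_bits]) simp
  finally show ?case by (simp add: Suc.IH[OF Suc.prems])
qed

lemma mexp_diagonal:
  assumes "\<And>z w. z \<noteq> w \<Longrightarrow> D z w = 0" and "z \<in> bits n"
  shows "mexp n D z w = (if z = w then exp (D z z) else 0)"
proof -
  have "mexp n D z w = (\<Sum>m. (if z = w then D z z ^ m else 0) / fact m)"
    unfolding mexp_def by (simp add: mat_pow_diagonal[OF assms])
  then show ?thesis using exp_sums[of "D z z"] by (cases "z = w") (simp_all add: sums_iff)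
qed

lemma mexp_phase:
  assumes "z \<in> bits n"
  shows "mexp n (op_scale c (Cop T)) z w = (if z = w then (if z \<in> T then exp c else 1) else 0)"
  by (subst mexp_diagonal) (auto simp: assms op_scale_def Cop_def)

lemma sum_fn_hamming_bits:
  assumes k: "k \<in> bits n"
  shows "(\<Sum>w\<in>bits n. fn n \<beta> (hamming k w)) = (\<Sum>d\<le>n. of_nat (n choose d) * fn n \<beta> d)"
proof -
  let ?a = "complex_of_real (cos \<beta>)" and ?b = "- \<i> * complex_of_real (sin \<beta>)"
  have L: "length k = n" using k by (simp add: bits_def)
  have "(\<Sum>w\<in>bits n. fn n \<beta> (hamming k w)) = (\<Sum>w\<in>bits n. \<Prod>j<n. if k ! j \<noteq> w ! j then ?b else ?a)"
    unfolding prod_hamming_pow[OF L] fn_def ..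
  also have "\<dots> = (\<Prod>j<n. ?b + ?a)"
    by (subst sum_bits_prod) (intro prod.cong refl, auto)
  also have "\<dots> = (?b + ?a) ^ n"
    by simp
  also have "\<dots> = (\<Sum>d\<le>n. of_nat (n choose d) * ?b ^ d * ?a ^ (n - d))"
    by (rule binomial_ring)
  finally show ?thesis
    by (simp add: fn_def mult_ac)
qed

lemma sum_fn_hamming_subset:
  assumes k: "k \<in> bits n" and T: "T \<subseteq> bits n"
  shows "(\<Sum>w\<in>T. fn n \<beta> (hamming k w)) = (\<Sum>d\<le>n. of_nat (num_d T d k) * fn n \<beta> d)"
proof -
  have fin: "finite T" using T finite_bits by (rule finite_subset)
  have len: "length w = n" if "w \<in> T" for w
    using that T by (auto simp: bits_def)
  have sym: "hamming k w = hamming w k" if "w \<in> T" for w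
    using len[OF that] k hamming_commute[of w k] by (simp add: bits_def)
  have le: "hamming w k \<le> n" if "w \<in> T" for w
    using len[OF that] hamming_le_length[of w k] by simp
  have "(\<Sum>w\<in>T. fn n \<beta> (hamming k w)) = (\<Sum>w\<in>T. fn n \<beta> (hamming w k))"
    by (simp add: sym)
  also have "\<dots> = (\<Sum>d\<le>n. \<Sum>w\<in>{x \<in> T. hamming x k = d}. fn n \<beta> (hamming w k))"
    by (rule sum.group[OF fin finite_atMost, symmetric]) (auto simp: le)
  also have "\<dots> = (\<Sum>d\<le>n. of_nat (num_d T d k) * fn n \<beta> d)"
    by (simp add: num_d_def)
  finally show ?thesis .
qed

lemma ck_eq:
  "ck n T \<beta> \<gamma> k = (exp (- \<i> * of_real \<gamma>) - 1) * (\<Sum>d\<le>n. of_nat (num_d T d k) * fn n \<beta> d)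
                   + (\<Sum>d\<le>n. of_nat (n choose d) * fn n \<beta> d)"
  unfolding ck_def by (simp add: ring_distribs sum.distrib sum_distrib_left mult_ac)

lemma apply_phase_plus_state:
  assumes w: "w \<in> bits n"
  shows "apply_op n (mexp n (op_scale c (Cop T))) (plus_state n) w
       = (if w \<in> T then exp c else 1) / sqrt (2 ^ n)"
proof -
  have "apply_op n (mexp n (op_scale c (Cop T))) (plus_state n) w
      = (\<Sum>v\<in>bits n. if v = w then (if w \<in> T then exp c else 1) / sqrt (2 ^ n) else 0)"
    unfolding apply_op_def plus_state_def by (intro sum.cong refl) (simp add: mexp_phase[OF w])
  then show ?thesis using w by simp
qed

lemma qaoa_state_eq:
  assumes k: "k \<in> bits n" and T: "T \<subseteq> bits n"
  shows "qaoa_state n T \<beta> \<gamma> k = ck n T \<beta> \<gamma> k / sqrt (2 ^ n)"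
proof -
  let ?e = "exp (- \<i> * of_real \<gamma>)" and ?f = "\<lambda>w. fn n \<beta> (hamming k w)"
  have "qaoa_state n T \<beta> \<gamma> k = (\<Sum>w\<in>bits n. ?f w * (if w \<in> T then ?e else 1)) / sqrt (2 ^ n)"
    unfolding qaoa_state_def apply_op_def[of n "mexp n (op_scale _ (Xop n))"] sum_divide_distrib
    by (intro sum.cong refl) (simp only: mexp_mixer[OF k] apply_phase_plus_state, simp)
  also have "(\<Sum>w\<in>bits n. ?f w * (if w \<in> T then ?e else 1))
      = (\<Sum>w\<in>bits n. ?f w) + (?e - 1) * (\<Sum>w\<in>T. ?f w)"
  proof -
    have "?f w * (if w \<in> T then ?e else 1) = ?f w + (?e - 1) * (if w \<in> T then ?f w else 0)" for w
      by (simp add: algebra_simps)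
    moreover have "(\<Sum>w\<in>bits n. if w \<in> T then ?f w else 0) = (\<Sum>w\<in>T. ?f w)"
      using T by (simp add: sum.inter_restrict[symmetric] Int_absorb1)
    ultimately show ?thesis
      by (simp only: sum.distrib sum_distrib_left[symmetric])
  qed
  also have "\<dots> = ck n T \<beta> \<gamma> k"
    unfolding ck_eq sum_fn_hamming_bits[OF k] sum_fn_hamming_subset[OF k T] by (simp add: algebra_simps)
  finally show ?thesis .
qed

lemma F1_eq:
  assumes T: "T \<subseteq> bits n"
  shows "F1 n T \<beta> \<gamma> = (\<Sum>k\<in>T. (cmod (ck n T \<beta> \<gamma> k))\<^sup>2) / 2 ^ n"
proof -
  let ?q = "qaoa_state n T \<beta> \<gamma>"
  have "apply_op n (Cop T) ?q z = (if z \<in> T then ?q z else 0)" if "z \<in> bits n" for z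
    unfolding apply_op_def Cop_def using that by (simp add: if_distrib[of "\<lambda>x. x * _"] cong: if_cong)
  then have "(\<Sum>z\<in>bits n. cnj (?q z) * apply_op n (Cop T) ?q z)
      = (\<Sum>z\<in>bits n. if z \<in> T then cnj (?q z) * ?q z else 0)"
    by (intro sum.cong refl) simp
  also have "\<dots> = (\<Sum>z\<in>T. cnj (?q z) * ?q z)"
    using T by (simp add: sum.inter_restrict[symmetric] Int_absorb1)
  also have "\<dots> = (\<Sum>k\<in>T. of_real ((cmod (ck n T \<beta> \<gamma> k))\<^sup>2 / 2 ^ n))"
  proof (intro sum.cong refl)
    fix k assume "k \<in> T"
    then have "?q k = ck n T \<beta> \<gamma> k / sqrt (2 ^ n)" using T by (auto intro: qaoa_state_eq)
    then have "(cmod (?q k))\<^sup>2 = (cmod (ck n T \<beta> \<gamma> k))\<^sup>2 / 2 ^ n"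
      by (simp add: norm_divide power_divide)
    moreover have "cnj (?q k) * ?q k = of_real ((cmod (?q k))\<^sup>2)"
      by (subst complex_norm_square) (simp add: mult.commute)
    ultimately show "cnj (?q k) * ?q k = of_real ((cmod (ck n T \<beta> \<gamma> k))\<^sup>2 / 2 ^ n)"
      by simp
  qed
  finally show ?thesis unfolding F1_def by (simp add: sum_divide_distrib)
qed

definition instance_wgt :: "bool list set \<Rightarrow> nat \<Rightarrow> real \<Rightarrow> nat \<Rightarrow> nat \<Rightarrow> complex" where
  "instance_wgt S n \<gamma> d1 d2 =
     of_real (avg S (\<lambda>k. real (num_d S d1 k * num_d S d2 k)))
       * (exp (- \<i> * of_real \<gamma>) - 1) * (exp (\<i> * of_real \<gamma>) - 1)
   + of_real (avg S (\<lambda>k. real (num_d S d1 k)))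
       * (exp (- \<i> * of_real \<gamma>) - 1) * of_nat (n choose d2)
   + of_real (avg S (\<lambda>k. real (num_d S d2 k)))
       * (exp (\<i> * of_real \<gamma>) - 1) * of_nat (n choose d1)
   + of_nat (n choose d1) * of_nat (n choose d2)"

lemma avg_ck_coeff_prod:
  assumes "finite S" and "S \<noteq> {}"
  shows "(\<Sum>k\<in>S. (of_nat (num_d S d1 k) * (exp (- \<i> * of_real \<gamma>) - 1) + of_nat (n choose d1))
             * cnj (of_nat (num_d S d2 k) * (exp (- \<i> * of_real \<gamma>) - 1) + of_nat (n choose d2)))
          / of_nat (card S) = instance_wgt S n \<gamma> d1 d2"
proof -
  let ?em = "exp (- \<i> * of_real \<gamma>) - 1" and ?ep = "exp (\<i> * of_real \<gamma>) - 1"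
  have cnj_em: "cnj ?em = ?ep"
    by (simp add: exp_cnj)
  have pw: "(of_nat x1 * e + of_nat c1) * cnj (of_nat x2 * e + of_nat c2)
      = of_nat (x1 * x2) * e * cnj e + of_nat x1 * e * of_nat c2 + of_nat x2 * cnj e * of_nat c1
        + of_nat c1 * of_nat c2" for x1 x2 c1 c2 :: nat and e :: complex
    by (simp add: algebra_simps)
  have "(\<Sum>k\<in>S. (of_nat (num_d S d1 k) * ?em + of_nat (n choose d1))
             * cnj (of_nat (num_d S d2 k) * ?em + of_nat (n choose d2)))
      = (\<Sum>k\<in>S. of_nat (num_d S d1 k * num_d S d2 k) * ?em * ?ep
          + of_nat (num_d S d1 k) * ?em * of_nat (n choose d2)
          + of_nat (num_d S d2 k) * ?ep * of_nat (n choose d1)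
          + of_nat (n choose d1) * of_nat (n choose d2))"
    unfolding pw cnj_em ..
  moreover have "\<dots> = (\<Sum>k\<in>S. of_nat (num_d S d1 k * num_d S d2 k)) * ?em * ?ep
        + (\<Sum>k\<in>S. of_nat (num_d S d1 k)) * ?em * of_nat (n choose d2)
        + (\<Sum>k\<in>S. of_nat (num_d S d2 k)) * ?ep * of_nat (n choose d1)
        + of_nat (card S) * (of_nat (n choose d1) * of_nat (n choose d2))"
    unfolding sum.distrib sum_distrib_right by simp
  moreover have "instance_wgt S n \<gamma> d1 d2 = ((\<Sum>k\<in>S. of_nat (num_d S d1 k * num_d S d2 k)) * ?em * ?ep
        + (\<Sum>k\<in>S. of_nat (num_d S d1 k)) * ?em * of_nat (n choose d2)
        + (\<Sum>k\<in>S. of_nat (num_d S d2 k)) * ?ep * of_nat (n choose d1)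
        + of_nat (card S) * (of_nat (n choose d1) * of_nat (n choose d2))) / of_nat (card S)"
    using assms unfolding instance_wgt_def avg_def
    by (simp add: of_real_sum add_divide_distrib field_simps del: of_nat_mult)
  ultimately show ?thesis by simp
qed

lemma avg_cmod_ck_sq:
  assumes "finite S" and "S \<noteq> {}"
  shows "complex_of_real (avg S (\<lambda>k. (cmod (ck n S \<beta> \<gamma> k))\<^sup>2))
       = (\<Sum>d1\<le>n. \<Sum>d2\<le>n. instance_wgt S n \<gamma> d1 d2 * fn n \<beta> d1 * cnj (fn n \<beta> d2))"
proof -
  define a where "a k d = of_nat (num_d S d k) * (exp (- \<i> * of_real \<gamma>) - 1) + of_nat (n choose d)" for k d
  have "complex_of_real ((cmod (ck n S \<beta> \<gamma> k))\<^sup>2)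
      = (\<Sum>d1\<le>n. \<Sum>d2\<le>n. a k d1 * cnj (a k d2) * (fn n \<beta> d1 * cnj (fn n \<beta> d2)))" for k
    unfolding complex_norm_square ck_def a_def[symmetric] cnj_sum sum_product by (simp add: mult_ac)
  then have "complex_of_real (avg S (\<lambda>k. (cmod (ck n S \<beta> \<gamma> k))\<^sup>2))
      = (\<Sum>k\<in>S. \<Sum>d1\<le>n. \<Sum>d2\<le>n. a k d1 * cnj (a k d2) * (fn n \<beta> d1 * cnj (fn n \<beta> d2))) / of_nat (card S)"
    unfolding avg_def by (simp add: of_real_sum)
  also have "\<dots> = (\<Sum>d1\<le>n. \<Sum>d2\<le>n. \<Sum>k\<in>S. a k d1 * cnj (a k d2) * (fn n \<beta> d1 * cnj (fn n \<beta> d2))) / of_nat (card S)"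
    by (subst sum.swap, subst (2) sum.swap) (rule refl)
  also have "\<dots> = (\<Sum>d1\<le>n. \<Sum>d2\<le>n. ((\<Sum>k\<in>S. a k d1 * cnj (a k d2)) / of_nat (card S))
      * (fn n \<beta> d1 * cnj (fn n \<beta> d2)))"
    by (simp add: sum_divide_distrib sum_distrib_right)
  also have "\<dots> = (\<Sum>d1\<le>n. \<Sum>d2\<le>n. instance_wgt S n \<gamma> d1 d2 * fn n \<beta> d1 * cnj (fn n \<beta> d2))"
    unfolding a_def avg_ck_coeff_prod[OF assms] by (simp add: mult_ac)
  finally show ?thesis .
qed

lemma Cauchy_Schwarz_integral:
  fixes f g :: "'a \<Rightarrow> real"
  assumes [measurable]: "f \<in> borel_measurable M" "g \<in> borel_measurable M"
    and f2: "integrable M (\<lambda>x. (f x)\<^sup>2)" and g2: "integrable M (\<lambda>x. (g x)\<^sup>2)"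
  shows "\<bar>\<integral>x. f x * g x \<partial>M\<bar> \<le> sqrt ((\<integral>x. (f x)\<^sup>2 \<partial>M) * (\<integral>x. (g x)\<^sup>2 \<partial>M))"
proof -
  define A where "A = (\<integral>x. (f x)\<^sup>2 \<partial>M)"
  define B where "B = (\<integral>x. (g x)\<^sup>2 \<partial>M)"
  define N where "N = (\<integral>\<^sup>+x. ennreal \<bar>f x\<bar> * ennreal \<bar>g x\<bar> \<partial>M)"
  have sq: "(\<integral>\<^sup>+x. ennreal \<bar>h x\<bar> ^ 2 \<partial>M) = ennreal (\<integral>x. (h x)\<^sup>2 \<partial>M)"
    if "integrable M (\<lambda>x. (h x)\<^sup>2)" for h :: "'a \<Rightarrow> real"
    using nn_integral_eq_integral[OF that] by (simp add: ennreal_power)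
  have "N\<^sup>2 \<le> ennreal A * ennreal B"
    using Cauchy_Schwarz_nn_integral[of "\<lambda>x. ennreal \<bar>f x\<bar>" M "\<lambda>x. ennreal \<bar>g x\<bar>"]
    unfolding N_def A_def B_def sq[OF f2] sq[OF g2] by simp
  also have "\<dots> = ennreal (A * B)"
    by (simp add: A_def B_def ennreal_mult)
  finally have N2: "N\<^sup>2 \<le> ennreal (A * B)" .
  then have "N \<noteq> \<top>"
    by (auto simp: power2_eq_square top_unique)
  then have "N = ennreal (enn2real N)"
    by (simp add: ennreal_enn2real_if)
  moreover have "0 \<le> A * B"
    by (simp add: A_def B_def)
  ultimately have "(enn2real N)\<^sup>2 \<le> A * B"
    using N2 by (metis ennreal_le_iff ennreal_power enn2real_nonneg)
  then have "enn2real N \<le> sqrt (A * B)"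
    by (simp add: real_le_rsqrt)
  have "\<bar>\<integral>x. f x * g x \<partial>M\<bar> \<le> (\<integral>x. \<bar>f x * g x\<bar> \<partial>M)"
    by (rule integral_abs_bound)
  also have "\<dots> = enn2real N"
    unfolding N_def by (simp add: integral_eq_nn_integral abs_mult ennreal_mult)
  also have "\<dots> \<le> sqrt (A * B)" by fact
  finally show ?thesis unfolding A_def B_def .
qed

lemma (in prob_space) covariance_abs_le_sqrt_variance:
  fixes X Y :: "'a \<Rightarrow> real"
  assumes [measurable]: "X \<in> borel_measurable M" "Y \<in> borel_measurable M"
    and X2: "integrable M (\<lambda>x. (X x)\<^sup>2)" and Y2: "integrable M (\<lambda>x. (Y x)\<^sup>2)"
  shows "\<bar>expectation (\<lambda>x. X x * Y x) - expectation X * expectation Y\<bar> \<le> sqrt (variance X * variance Y)"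
proof -
  define a where "a = expectation X"
  define b where "b = expectation Y"
  have [simp]: "integrable M X" "integrable M Y"
    using X2 Y2 by (auto intro: square_integrable_imp_integrable)
  have "integrable M (\<lambda>x. (X x)\<^sup>2 + (Y x)\<^sup>2)"
    using X2 Y2 by simp
  then have [simp]: "integrable M (\<lambda>x. X x * Y x)"
  proof (rule Bochner_Integration.integrable_bound)
    show "AE x in M. norm (X x * Y x) \<le> norm ((X x)\<^sup>2 + (Y x)\<^sup>2)"
    proof (intro AE_I2)
      fix x
      have "\<bar>X x * Y x\<bar> \<le> 2 * \<bar>X x\<bar> * \<bar>Y x\<bar>"
        by (simp add: abs_mult)
      also have "\<dots> \<le> (X x)\<^sup>2 + (Y x)\<^sup>2"
        using sum_squares_bound[of "\<bar>X x\<bar>" "\<bar>Y x\<bar>"] by simp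
      finally show "norm (X x * Y x) \<le> norm ((X x)\<^sup>2 + (Y x)\<^sup>2)"
        by simp
    qed
  qed simp
  have sq: "integrable M (\<lambda>x. (Z x - c)\<^sup>2)" if "integrable M Z" "integrable M (\<lambda>x. (Z x)\<^sup>2)"
    for Z :: "'a \<Rightarrow> real" and c
    using that by (simp add: power2_diff)
  have "expectation (\<lambda>x. (X x - a) * (Y x - b)) = expectation (\<lambda>x. X x * Y x) - a * b"
    by (simp add: algebra_simps prob_space a_def b_def)
  moreover have "\<bar>expectation (\<lambda>x. (X x - a) * (Y x - b))\<bar> \<le> sqrt (variance X * variance Y)"
    unfolding a_def b_def by (rule Cauchy_Schwarz_integral) (simp_all add: sq X2 Y2)
  ultimately show ?thesis unfolding a_def b_def by simp
qed

lemma (in finite_measure) integrable_comp_finite_range: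
  fixes g :: "'b \<Rightarrow> 'c::{banach, second_countable_topology}"
  assumes "T \<in> measurable M (count_space UNIV)" and "finite A" and "\<And>x. x \<in> space M \<Longrightarrow> T x \<in> A"
  shows "integrable M (\<lambda>x. g (T x))"
proof (rule integrable_const_bound[where B = "\<Sum>a\<in>A. norm (g a)"])
  show "AE x in M. norm (g (T x)) \<le> (\<Sum>a\<in>A. norm (g a))"
    using assms(2,3) by (intro AE_I2 member_le_sum) auto
  show "(\<lambda>x. g (T x)) \<in> borel_measurable M"
    using assms(1) by (rule measurable_compose) simp
qed

locale random_target_set = prob_space M for M :: "'i measure" +
  fixes T :: "'i \<Rightarrow> bool list set" and n :: nat
  assumes T_measurable: "T \<in> measurable M (count_space UNIV)"
    and T_nonempty: "\<omega> \<in> space M \<Longrightarrow> T \<omega> \<noteq> {}"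
    and T_subset_bits: "\<omega> \<in> space M \<Longrightarrow> T \<omega> \<subseteq> bits n"
begin

lemma finite_T: "\<omega> \<in> space M \<Longrightarrow> finite (T \<omega>)"
  using T_subset_bits finite_bits by (rule finite_subset)

lemma integrable_instance:
  fixes g :: "bool list set \<Rightarrow> 'b::{banach, second_countable_topology}"
  shows "integrable M (\<lambda>\<omega>. g (T \<omega>))"
  by (rule integrable_comp_finite_range[OF T_measurable, of "Pow (bits n)"]) (auto dest: T_subset_bits)

lemma borel_measurable_instance: "(\<lambda>\<omega>. g (T \<omega>)) \<in> borel_measurable M"
  using T_measurable by (rule measurable_compose) simp

lemma expectation_instance_wgt: "expectation (\<lambda>\<omega>. instance_wgt (T \<omega>) n \<gamma> d1 d2) = wgt M T n \<gamma> d1 d2"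
proof -
  have "integrable M (\<lambda>\<omega>. complex_of_real (avg (T \<omega>) (\<lambda>k. real (g (T \<omega>) k))))" for g
    by (rule integrable_instance)
  from this[of "\<lambda>S k. num_d S d1 k * num_d S d2 k"] this[of "\<lambda>S. num_d S d1"] this[of "\<lambda>S. num_d S d2"]
  show ?thesis
    unfolding instance_wgt_def wgt_def Ex_def integral_complex_of_real[symmetric]
    by (simp add: prob_space)
qed

lemma expectation_avg_cmod_ck_sq:
  "complex_of_real (Ex M (\<lambda>\<omega>. avg (T \<omega>) (\<lambda>k. (cmod (ck n (T \<omega>) \<beta> \<gamma> k))\<^sup>2)))
     = (\<Sum>d1\<le>n. \<Sum>d2\<le>n. wgt M T n \<gamma> d1 d2 * fn n \<beta> d1 * cnj (fn n \<beta> d2))"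
proof -
  have "complex_of_real (Ex M (\<lambda>\<omega>. avg (T \<omega>) (\<lambda>k. (cmod (ck n (T \<omega>) \<beta> \<gamma> k))\<^sup>2)))
      = expectation (\<lambda>\<omega>. \<Sum>d1\<le>n. \<Sum>d2\<le>n. instance_wgt (T \<omega>) n \<gamma> d1 d2 * (fn n \<beta> d1 * cnj (fn n \<beta> d2)))"
    unfolding Ex_def integral_complex_of_real[symmetric]
    by (intro Bochner_Integration.integral_cong refl)
      (simp add: avg_cmod_ck_sq finite_T T_nonempty mult.assoc)
  also have "\<dots> = (\<Sum>d1\<le>n. \<Sum>d2\<le>n. wgt M T n \<gamma> d1 d2 * (fn n \<beta> d1 * cnj (fn n \<beta> d2)))"
  proof -
    have "integrable M (\<lambda>\<omega>. instance_wgt (T \<omega>) n \<gamma> d1 d2)" for d1 d2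
      by (rule integrable_instance)
    then show ?thesis
      by (simp add: Bochner_Integration.integral_sum expectation_instance_wgt)
  qed
  finally show ?thesis
    by (simp add: mult.assoc)
qed

lemma expectation_F1:
  "Ex M (\<lambda>\<omega>. F1 n (T \<omega>) \<beta> \<gamma>)
     = Ex M (\<lambda>\<omega>. real (card (T \<omega>)) * avg (T \<omega>) (\<lambda>k. (cmod (ck n (T \<omega>) \<beta> \<gamma> k))\<^sup>2)) / 2 ^ n"
proof -
  have "F1 n (T \<omega>) \<beta> \<gamma> = real (card (T \<omega>)) * avg (T \<omega>) (\<lambda>k. (cmod (ck n (T \<omega>) \<beta> \<gamma> k))\<^sup>2) / 2 ^ n"
    if "\<omega> \<in> space M" for \<omega>
    using that by (simp add: F1_eq T_subset_bits finite_T T_nonempty avg_def)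
  then show ?thesis
    unfolding Ex_def by (simp cong: Bochner_Integration.integral_cong)
qed

lemma F1_expectation_approx:
  "\<bar>Ex M (\<lambda>\<omega>. F1 n (T \<omega>) \<beta> \<gamma>)
      - Ex M (\<lambda>\<omega>. real (card (T \<omega>))) / 2 ^ n
        * Ex M (\<lambda>\<omega>. avg (T \<omega>) (\<lambda>k. (cmod (ck n (T \<omega>) \<beta> \<gamma> k))\<^sup>2))\<bar>
    \<le> sqrt (Var M (\<lambda>\<omega>. real (card (T \<omega>)))
            * Var M (\<lambda>\<omega>. avg (T \<omega>) (\<lambda>k. (cmod (ck n (T \<omega>) \<beta> \<gamma> k))\<^sup>2)))"
  (is "\<bar>_ - Ex M ?C / _ * Ex M ?Y\<bar> \<le> sqrt (Var M ?C * Var M ?Y)")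
proof -
  have "\<bar>Ex M (\<lambda>\<omega>. F1 n (T \<omega>) \<beta> \<gamma>) - Ex M ?C / 2 ^ n * Ex M ?Y\<bar>
      = \<bar>Ex M (\<lambda>\<omega>. ?C \<omega> * ?Y \<omega>) - Ex M ?C * Ex M ?Y\<bar> / 2 ^ n"
    by (simp add: expectation_F1 diff_divide_distrib[symmetric] abs_divide)
  also have "\<dots> \<le> \<bar>Ex M (\<lambda>\<omega>. ?C \<omega> * ?Y \<omega>) - Ex M ?C * Ex M ?Y\<bar>"
    by (simp add: divide_le_eq mult_le_cancel_left1)
  also have "\<dots> \<le> sqrt (Var M ?C * Var M ?Y)"
    unfolding Var_def Ex_def
    by (rule covariance_abs_le_sqrt_variance; rule borel_measurable_instance integrable_instance)
  finally show ?thesis .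
qed

end

theorem theorem1:
  fixes M :: "'i measure" and T :: "'i \<Rightarrow> bool list set" and n :: nat and \<beta> \<gamma> :: real
  assumes "prob_space M"
    and "T \<in> measurable M (count_space UNIV)"
    and "\<And>\<omega>. \<omega> \<in> space M \<Longrightarrow> T \<omega> \<noteq> {} \<and> T \<omega> \<subseteq> bits n"
  shows "complex_of_real (Ex M (\<lambda>\<omega>. avg (T \<omega>) (\<lambda>k. (cmod (ck n (T \<omega>) \<beta> \<gamma> k))\<^sup>2)))
           = (\<Sum>d1\<le>n. \<Sum>d2\<le>n. wgt M T n \<gamma> d1 d2 * fn n \<beta> d1 * cnj (fn n \<beta> d2))
       \<and> \<bar>Ex M (\<lambda>\<omega>. F1 n (T \<omega>) \<beta> \<gamma>)
           - Ex M (\<lambda>\<omega>. real (card (T \<omega>))) / 2 ^ n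
             * Ex M (\<lambda>\<omega>. avg (T \<omega>) (\<lambda>k. (cmod (ck n (T \<omega>) \<beta> \<gamma> k))\<^sup>2))\<bar>
         \<le> sqrt (Var M (\<lambda>\<omega>. real (card (T \<omega>)))
                 * Var M (\<lambda>\<omega>. avg (T \<omega>) (\<lambda>k. (cmod (ck n (T \<omega>) \<beta> \<gamma> k))\<^sup>2)))"
proof -
  interpret random_target_set M T n
    using assms unfolding random_target_set_def random_target_set_axioms_def by blast
  show ?thesis
    using expectation_avg_cmod_ck_sq F1_expectation_approx by blast
qed

end
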